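(* For any field $\mathbb{F}$ and any matrix $M\in\mathbb{F}^{2\times2}$, the $8\times 8$ matrix $M^{\otimes 3}$ satisfies $\mathcal{R}_{M^{\otimes 3}}(1)\le 23$.
   Context: $\mathcal{R}_A(r)=\min\{\mathrm{nnz}(B):\mathrm{rank}(A+B)\le r\}$ is the rank-$r$ rigidity of $A$ over $\mathbb{F}$ (minimum number of entries to change to get rank $\le r$). *)

theory Defs
  imports "Jordan_Normal_Form.DL_Rank"
begin

definition kron_mat :: "'a::field mat \<Rightarrow> 'a mat \<Rightarrow> 'a mat" where
  "kron_mat A B = mat (dim_row A * dim_row B) (dim_col A * dim_col B)
     (\<lambda>(i,j). A $$ (i div dim_row B, j div dim_col B) * B $$ (i mod dim_row B, j mod dim_col B))"

definition nnz :: "'a::field mat \<Rightarrow> nat" where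
  "nnz B = card {(i,j). i < dim_row B \<and> j < dim_col B \<and> B $$ (i,j) \<noteq> 0}"

definition rigidity :: "'a::field mat \<Rightarrow> nat \<Rightarrow> nat" where
  "rigidity A r = Min {nnz B | B. B \<in> carrier_mat (dim_row A) (dim_col A)
        \<and> vec_space.rank (dim_row A) (A + B) \<le> r}"

end

theory Submission
  imports Defs
begin

(*
  Index the rows and columns of the 8 x 8 matrix M \<otimes> M \<otimes> M by their three binary digits;
  entry (i,j) is then the product over the digits k of M(i_k, j_k).

  If some entry M(p,q) vanishes, so does every entry with a digit pair (i_k, j_k) = (p,q).
  Only 3^3 = 27 positions survive, 8 of them in the row whose digits are all 1 - p, so keeping
  that row and clearing the rest changes at most 19 entries.

  Otherwise M(0,0), M(0,1), M(1,0) are nonzero and with the cross ratio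
  t = M(0,0) M(1,1) / (M(0,1) M(1,0)) every entry satisfies M(x,y) = M(x,0) M(0,y) / M(0,0) * t^(x y).
  Hence entry (i,j) is a rank-one matrix times t^|i AND j|, where |.| counts one-digits.
  Replacing the exponent by [i = 7] + (|j| - 1) (truncated at 0), a row term plus a column
  term, yields a rank-one matrix that differs from M \<otimes> M \<otimes> M in exactly 23 positions.
*)

lemma nnz_le_dims: "nnz B \<le> dim_row B * dim_col B"
proof -
  have "nnz B \<le> card ({..<dim_row B} \<times> {..<dim_col B})"
    unfolding nnz_def by (intro card_mono) auto
  then show ?thesis
    by (simp add: card_cartesian_product)
qed

lemma rigidity_le_nnz:
  fixes A B :: "'a::field mat"
  assumes "B \<in> carrier_mat (dim_row A) (dim_col A)" and "vec_space.rank (dim_row A) (A + B) \<le> r"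
  shows "rigidity A r \<le> nnz B"
proof -
  let ?S = "{nnz C | C. C \<in> carrier_mat (dim_row A) (dim_col A) \<and> vec_space.rank (dim_row A) (A + C) \<le> r}"
  have "?S \<subseteq> {..dim_row A * dim_col A}"
  proof
    fix x assume "x \<in> ?S"
    then obtain C :: "'a mat" where "x = nnz C" "C \<in> carrier_mat (dim_row A) (dim_col A)"
      by blast
    then show "x \<in> {..dim_row A * dim_col A}"
      using nnz_le_dims[of C] by simp
  qed
  then have "finite ?S"
    by (rule finite_subset) simp
  moreover have "nnz B \<in> ?S"
    using assms by blast
  ultimately show ?thesis
    unfolding rigidity_def by (rule Min_le)
qed

lemma rigidity_1_le_card_mismatch:
  fixes A :: "'a::field mat" and f g :: "nat \<Rightarrow> 'a"
  assumes "finite T"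
    and "\<And>i j. i < dim_row A \<Longrightarrow> j < dim_col A \<Longrightarrow> (i,j) \<notin> T \<Longrightarrow> A $$ (i,j) = f i * g j"
  shows "rigidity A 1 \<le> card T"
proof -
  define B where "B = mat (dim_row A) (dim_col A) (\<lambda>(i,j). f i * g j - A $$ (i,j))"
  have B: "B \<in> carrier_mat (dim_row A) (dim_col A)"
    unfolding B_def by simp
  have "vec_space.rank (dim_row A) (A + B) \<le> 1"
    by (rule vec_space.rank_le_1_product_entries[of "A + B" _ "dim_col A" f g]) (use B in \<open>auto simp: B_def\<close>)
  then have "rigidity A 1 \<le> nnz B"
    by (rule rigidity_le_nnz[OF B])
  also have "nnz B \<le> card T"
    unfolding nnz_def using assms by (intro card_mono) (auto simp: B_def, metis)
  finally show ?thesis .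
qed

lemma rigidity_1_le_card_off_row:
  fixes A :: "'a::field mat"
  assumes "finite T"
    and "\<And>i j. i < dim_row A \<Longrightarrow> j < dim_col A \<Longrightarrow> i \<noteq> r \<Longrightarrow> A $$ (i,j) \<noteq> 0 \<Longrightarrow> (i,j) \<in> T"
  shows "rigidity A 1 \<le> card T"
  using assms(1)
proof (rule rigidity_1_le_card_mismatch[where f = "\<lambda>i. of_bool (i = r)" and g = "\<lambda>j. A $$ (r,j)"])
  show "A $$ (i,j) = of_bool (i = r) * A $$ (r,j)"
    if "i < dim_row A" "j < dim_col A" "(i,j) \<notin> T" for i j
    using assms(2)[OF that(1,2)] that(3) by (cases "i = r") auto
qed

lemma index_kron_mat:
  "i < dim_row A * dim_row B \<Longrightarrow> j < dim_col A * dim_col B \<Longrightarrow>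
   kron_mat A B $$ (i,j) = A $$ (i div dim_row B, j div dim_col B) * B $$ (i mod dim_row B, j mod dim_col B)"
  by (simp add: kron_mat_def)

lemma kron_mat_carrier:
  "A \<in> carrier_mat n m \<Longrightarrow> B \<in> carrier_mat p q \<Longrightarrow> kron_mat A B \<in> carrier_mat (n * p) (m * q)"
  by (simp add: kron_mat_def)

definition bin_digit :: "nat \<Rightarrow> nat \<Rightarrow> nat" where
  "bin_digit i k = i div 2 ^ k mod 2"

lemma bin_digit_less_2: "bin_digit i k < 2"
  by (simp add: bin_digit_def)

lemma lessThan_3: "{..<3::nat} = {0, 1, 2}"
  by auto

lemma index_kron_cube:
  fixes M :: "'a::field mat"
  assumes M: "M \<in> carrier_mat 2 2" and "i < 8" "j < 8"
  shows "kron_mat M (kron_mat M M) $$ (i,j) = (\<Prod>k<3. M $$ (bin_digit i k, bin_digit j k))"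
proof -
  have MM: "kron_mat M M \<in> carrier_mat 4 4"
    using kron_mat_carrier[OF M M] by simp
  have mid_digit: "x mod 4 div 2 = x div 2 mod 2" for x :: nat
    by (simp add: mod_mult2_eq[of x 2 2, simplified])
  have "kron_mat M (kron_mat M M) $$ (i,j)
      = M $$ (i div 4, j div 4) * (M $$ (i div 2 mod 2, j div 2 mod 2) * M $$ (i mod 2, j mod 2))"
    using assms MM by (simp add: index_kron_mat mid_digit mod_mod_cancel)
  also have "\<dots> = (\<Prod>k<3. M $$ (bin_digit i k, bin_digit j k))"
    using assms by (simp add: lessThan_3 bin_digit_def mult_ac)
  finally show ?thesis .
qed

lemma card_pairs_less_eq_length_filter:
  "card {(i,j). i < m \<and> j < n \<and> P i j} = length (filter (\<lambda>(i,j). P i j) (List.product [0..<m] [0..<n]))"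
proof -
  have "{(i,j). i < m \<and> j < n \<and> P i j} = set (filter (\<lambda>(i,j). P i j) (List.product [0..<m] [0..<n]))"
    by auto
  then show ?thesis
    by (metis distinct_card distinct_filter distinct_product distinct_upt)
qed

lemma entry_2x2_cross_ratio:
  fixes M :: "'a::field mat"
  assumes "M $$ (0,0) \<noteq> 0" "M $$ (0,1) \<noteq> 0" "M $$ (1,0) \<noteq> 0" and "x < 2" "y < 2"
  shows "M $$ (x,y) = M $$ (x,0) * M $$ (0,y) / M $$ (0,0)
    * (M $$ (0,0) * M $$ (1,1) / (M $$ (0,1) * M $$ (1,0))) ^ (x * y)"
  using assms by (auto simp: less_2_cases_iff field_simps)

lemma index_kron_cube_cross_ratio:
  fixes M :: "'a::field mat"
  defines "t \<equiv> M $$ (0,0) * M $$ (1,1) / (M $$ (0,1) * M $$ (1,0))"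
  assumes M: "M \<in> carrier_mat 2 2" and nz: "M $$ (0,0) \<noteq> 0" "M $$ (0,1) \<noteq> 0" "M $$ (1,0) \<noteq> 0"
    and ij: "i < 8" "j < 8"
  shows "kron_mat M (kron_mat M M) $$ (i,j) = (\<Prod>k<3. M $$ (bin_digit i k, 0))
    * ((\<Prod>k<3. M $$ (0, bin_digit j k)) / M $$ (0,0) ^ 3) * t ^ (\<Sum>k<3. bin_digit i k * bin_digit j k)"
proof -
  have "kron_mat M (kron_mat M M) $$ (i,j) = (\<Prod>k<3. M $$ (bin_digit i k, bin_digit j k))"
    by (rule index_kron_cube[OF M ij])
  also have "\<dots> = (\<Prod>k<3. M $$ (bin_digit i k, 0) * M $$ (0, bin_digit j k) / M $$ (0,0)
      * t ^ (bin_digit i k * bin_digit j k))"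
    unfolding t_def using nz bin_digit_less_2 by (intro prod.cong refl entry_2x2_cross_ratio)
  also have "\<dots> = (\<Prod>k<3. M $$ (bin_digit i k, 0))
    * ((\<Prod>k<3. M $$ (0, bin_digit j k)) / M $$ (0,0) ^ 3) * t ^ (\<Sum>k<3. bin_digit i k * bin_digit j k)"
    by (simp add: prod.distrib prod_dividef power_sum)
  finally show ?thesis .
qed

lemma card_cross_ratio_mismatches:
  "card {(i,j). i < 8 \<and> j < 8 \<and>
     (\<Sum>k<3. bin_digit i k * bin_digit j k) \<noteq> of_bool (i = 7) + ((\<Sum>k<3. bin_digit j k) - 1)} = 23"
  unfolding card_pairs_less_eq_length_filter lessThan_3 by code_simp

lemma rigidity_kron_cube_le_23_cross_ratio:
  fixes M :: "'a::field mat"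
  assumes M: "M \<in> carrier_mat 2 2" and nz: "M $$ (0,0) \<noteq> 0" "M $$ (0,1) \<noteq> 0" "M $$ (1,0) \<noteq> 0"
  shows "rigidity (kron_mat M (kron_mat M M)) 1 \<le> 23"
proof -
  define t where "t = M $$ (0,0) * M $$ (1,1) / (M $$ (0,1) * M $$ (1,0))"
  define T where "T = {(i,j). i < 8 \<and> j < 8 \<and>
    (\<Sum>k<3. bin_digit i k * bin_digit j k) \<noteq> of_bool (i = 7) + ((\<Sum>k<3. bin_digit j k) - 1)}"
  have "rigidity (kron_mat M (kron_mat M M)) 1 \<le> card T"
  proof (rule rigidity_1_le_card_mismatch[where
        f = "\<lambda>i. (\<Prod>k<3. M $$ (bin_digit i k, 0)) * t ^ of_bool (i = 7)" and
        g = "\<lambda>j. (\<Prod>k<3. M $$ (0, bin_digit j k)) / M $$ (0,0) ^ 3 * t ^ ((\<Sum>k<3. bin_digit j k) - 1)"])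
    show "finite T"
      unfolding T_def by (rule finite_subset[of _ "{..<8} \<times> {..<8}"]) auto
    fix i j
    assume "i < dim_row (kron_mat M (kron_mat M M))" "j < dim_col (kron_mat M (kron_mat M M))" "(i,j) \<notin> T"
    then have ij: "i < 8" "j < 8"
      and exponent: "(\<Sum>k<3. bin_digit i k * bin_digit j k) = of_bool (i = 7) + ((\<Sum>k<3. bin_digit j k) - 1)"
      using kron_mat_carrier[OF M kron_mat_carrier[OF M M]] by (auto simp: T_def)
    show "kron_mat M (kron_mat M M) $$ (i,j) = (\<Prod>k<3. M $$ (bin_digit i k, 0)) * t ^ of_bool (i = 7)
        * ((\<Prod>k<3. M $$ (0, bin_digit j k)) / M $$ (0,0) ^ 3 * t ^ ((\<Sum>k<3. bin_digit j k) - 1))"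
      unfolding index_kron_cube_cross_ratio[OF M nz ij] t_def[symmetric] exponent power_add
      by (simp add: mult_ac)
  qed
  then show ?thesis
    unfolding T_def card_cross_ratio_mismatches .
qed

lemma card_digit_pair_avoiders:
  assumes "p < 2" "q < 2"
  shows "card {(i,j). i < 8 \<and> j < 8 \<and> i \<noteq> 7 * (1 - p) \<and> (\<forall>k\<in>{..<3}. (bin_digit i k, bin_digit j k) \<noteq> (p,q))} = 19"
proof -
  have counts: "\<forall>(p,q) \<in> {0,1} \<times> {0,1}. length (filter (\<lambda>(i,j). i \<noteq> 7 * (1 - p)
      \<and> (\<forall>k\<in>{0,1,2}. (bin_digit i k, bin_digit j k) \<noteq> (p,q))) (List.product [0..<8] [0..<8])) = 19"
    by code_simp
  have "(p,q) \<in> {0,1} \<times> {0,1}"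
    using assms by auto
  from bspec[OF counts this] show ?thesis
    unfolding card_pairs_less_eq_length_filter lessThan_3 by simp
qed

lemma rigidity_kron_cube_le_19_zero_entry:
  fixes M :: "'a::field mat"
  assumes M: "M \<in> carrier_mat 2 2" and pq: "p < 2" "q < 2" and zero: "M $$ (p,q) = 0"
  shows "rigidity (kron_mat M (kron_mat M M)) 1 \<le> 19"
proof -
  define T where "T = {(i,j). i < 8 \<and> j < 8 \<and> i \<noteq> 7 * (1 - p)
    \<and> (\<forall>k\<in>{..<3}. (bin_digit i k, bin_digit j k) \<noteq> (p,q))}"
  have "rigidity (kron_mat M (kron_mat M M)) 1 \<le> card T"
  proof (rule rigidity_1_le_card_off_row[where r = "7 * (1 - p)"])
    show "finite T"
      unfolding T_def by (rule finite_subset[of _ "{..<8} \<times> {..<8}"]) auto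
    fix i j
    assume "i < dim_row (kron_mat M (kron_mat M M))" "j < dim_col (kron_mat M (kron_mat M M))"
      and off_row: "i \<noteq> 7 * (1 - p)" and nonzero: "kron_mat M (kron_mat M M) $$ (i,j) \<noteq> 0"
    then have ij: "i < 8" "j < 8"
      using kron_mat_carrier[OF M kron_mat_carrier[OF M M]] by auto
    have "\<forall>k\<in>{..<3}. (bin_digit i k, bin_digit j k) \<noteq> (p,q)"
      using nonzero zero unfolding index_kron_cube[OF M ij] by auto
    then show "(i,j) \<in> T"
      using ij off_row by (simp add: T_def)
  qed
  then show ?thesis
    unfolding T_def card_digit_pair_avoiders[OF pq] .
qed

theorem mainTheorem7:
  fixes M :: "'a::field mat"
  assumes "M \<in> carrier_mat 2 2"
  shows "rigidity (kron_mat M (kron_mat M M)) 1 \<le> 23"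
proof (cases "M $$ (0,0) \<noteq> 0 \<and> M $$ (0,1) \<noteq> 0 \<and> M $$ (1,0) \<noteq> 0")
  case True
  then show ?thesis
    using assms rigidity_kron_cube_le_23_cross_ratio by blast
next
  case False
  then obtain p q :: nat where "p < 2" "q < 2" "M $$ (p,q) = 0"
    by (metis Suc_1 lessI pos2)
  then have "rigidity (kron_mat M (kron_mat M M)) 1 \<le> 19"
    using assms by (intro rigidity_kron_cube_le_19_zero_entry)
  then show ?thesis
    by simp
qed

end
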